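(* Let $n\geq 1$ be an integer, $p>1$ real, $q=pe^{2\pi i/n}$, and let $A\subset\mathbb R$ be a finite nonempty alphabet. Let $\Lambda_{n,p,A}=\{\sum_{j=1}^\infty x_jq^{-j}\mid x_j\in A\}$. For $h=1,\dots,n$ define $$\underline K(h)=\{k\in\{0,\dots,n-1\}\mid (k-h+1)\bmod n\leq \lfloor n/2\rfloor-1\},\qquad \overline K(h)=\{k\in\{0,\dots,n-1\}\mid (k-h+1)\bmod n\leq \lceil n/2\rceil-1\},$$ where $(k-h+1)\bmod n$ denotes the representative in $\{0,\dots,n-1\}$, and set $$\mathbf v_{2h-1}=\sum_{k\in\underline K(h)}q^k,\qquad \mathbf v_{2h}=\sum_{k\in\overline K(h)}q^k .$$ Then $$\mathrm{conv}(\Lambda_{n,p,A})=\frac{\max A-\min A}{p^n-1}\,\mathrm{conv}\{\mathbf v_h\mid h=1,\dots,2n\}+\frac{1}{p^n-1}\sum_{k=0}^{n-1}(\min A)\,q^k .$$ Moreover, if $n$ is even, then $$\mathrm{conv}(\Lambda_{n,p,A})=\frac{\max A-\min A}{p^n-1}\,\mathrm{conv}\{\mathbf v_{2h}\mid h=1,\dots,n\}+\frac{1}{p^n-1}\sum_{k=0}^{n-1}(\min A)\,q^k .$$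
   Context: For a set $Y\subset\mathbb C$, $c\in\mathbb R$ and $d\in\mathbb C$, $cY+d=\{cy+d\mid y\in Y\}$. $\mathrm{conv}$ denotes convex hull in $\mathbb C\cong\mathbb R^2$. *)

theory Defs
  imports "HOL-Analysis.Analysis"
begin

definition qbase :: "nat \<Rightarrow> real \<Rightarrow> complex" where
  "qbase n p = complex_of_real p * cis (2 * pi / real n)"

text \<open>Lambda_{n,p,A}: all sums sum_{j>=1} x_j q^{-j} with digits x_j in A
  (digit x (Suc j) is the coefficient of q^{-(j+1)}).\<close>
definition Lam :: "nat \<Rightarrow> real \<Rightarrow> real set \<Rightarrow> complex set" where
  "Lam n p A = {(\<Sum>j. complex_of_real (x (Suc j)) / (qbase n p) ^ (Suc j)) | x.
                  \<forall>j\<ge>1. x j \<in> A}"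

definition Klow :: "nat \<Rightarrow> nat \<Rightarrow> nat set" where
  "Klow n h = {k \<in> {0..<n}. (int k - int h + 1) mod int n \<le> \<lfloor>real n / 2\<rfloor> - 1}"

definition Kup :: "nat \<Rightarrow> nat \<Rightarrow> nat set" where
  "Kup n h = {k \<in> {0..<n}. (int k - int h + 1) mod int n \<le> \<lceil>real n / 2\<rceil> - 1}"

definition vv :: "nat \<Rightarrow> real \<Rightarrow> nat \<Rightarrow> complex" where
  "vv n p m = (if odd m then (\<Sum>k\<in>Klow n ((m + 1) div 2). (qbase n p) ^ k)
               else (\<Sum>k\<in>Kup n (m div 2). (qbase n p) ^ k))"

end

theory Submission
  imports Defs
begin

text \<open>The right-hand side is the image of a polytope, so it suffices to show that its vertices
  lie in \<open>\<Lambda>\<close> and that the support function of \<open>\<Lambda>\<close> is bounded by that of the polytope.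
  For a direction \<open>u\<close>, the functional \<open>u \<bullet> (\<Sum>\<^sub>j x\<^sub>j q\<^sup>-\<^sup>j)\<close> is maximised by the digit \<open>Max A\<close>
  wherever \<open>u \<bullet> q\<^sup>-\<^sup>j \<ge> 0\<close> and \<open>Min A\<close> elsewhere. As \<open>q\<^sup>n = p\<^sup>n\<close> is real, this choice is periodic
  and the bound sums in closed form over one period; it is attained by the periodic expansion
  representing the image of the partial sum \<open>\<Sum>\<^sub>k\<^sub>\<in>\<^sub>K q\<^sup>k\<close>, \<open>K = {k < n. u \<bullet> q\<^sup>k \<ge> 0}\<close>.
  The powers \<open>q\<^sup>k\<close> point in the directions \<open>2 pi k / n\<close>, so \<open>K\<close> is a cyclic arc of
  \<open>\<lfloor>n/2\<rfloor>\<close> or \<open>\<lceil>n/2\<rceil>\<close> consecutive residues, i.e. one of the index sets defining the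
  vertices \<open>v\<^sub>m\<close>; for even \<open>n\<close> the two lengths coincide.\<close>

lemma summable_geometric_bound:
  fixes s :: "nat \<Rightarrow> 'a::banach"
  assumes "p > 1" and "\<And>i. norm (s i) \<le> C * (1 / p) ^ i"
  shows "summable s"
proof (rule summable_comparison_test'[where N = 0])
  show "summable (\<lambda>i. C * (1 / p) ^ i)"
    using assms(1) by (intro summable_mult summable_geometric) simp
qed (use assms(2) in simp)

lemma sums_scaled_periodic:
  fixes s w :: "nat \<Rightarrow> 'a::{real_normed_field,banach}"
  assumes "summable s" and "\<And>i. s (i + n) = s i / P" and "P \<noteq> 1" and "P \<noteq> 0"
    and "\<And>i. i < n \<Longrightarrow> P * s i = w (n - Suc i)"
  shows "s sums ((\<Sum>k<n. w k) / (P - 1))"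
proof -
  have "suminf s = (\<Sum>i. s (i + n)) + (\<Sum>i<n. s i)"
    by (rule suminf_split_initial_segment[OF assms(1)])
  also have "(\<Sum>i. s (i + n)) = suminf s / P"
    unfolding assms(2) by (rule suminf_divide[OF assms(1)])
  finally have "(P - 1) * suminf s = P * (\<Sum>i<n. s i)"
    using assms(4) by (simp add: field_simps)
  also have "\<dots> = (\<Sum>i<n. w (n - Suc i))"
    by (simp add: sum_distrib_left assms(5))
  also have "\<dots> = (\<Sum>k<n. w k)"
    by (rule sum.nat_diff_reindex)
  finally show ?thesis
    using assms(1,3) by (simp add: sums_iff field_simps)
qed

lemma sum_two_valued_coeffs:
  fixes w :: "nat \<Rightarrow> 'a::real_algebra_1"
  assumes "K \<subseteq> {..<n}"
  shows "(\<Sum>k<n. of_real (if k \<in> K then b else a) * w k)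
           = (\<Sum>k<n. of_real a * w k) + of_real (b - a) * (\<Sum>k\<in>K. w k)"
proof -
  have "(\<Sum>k<n. of_real (if k \<in> K then b else a) * w k)
      = (\<Sum>k<n. of_real a * w k + (if k \<in> K then of_real (b - a) * w k else 0))"
    by (rule sum.cong) (auto simp: algebra_simps)
  also have "\<dots> = (\<Sum>k<n. of_real a * w k) + of_real (b - a) * (\<Sum>k\<in>K. w k)"
    using assms by (simp add: sum.distrib sum.inter_restrict[symmetric] sum_distrib_left Int_absorb1)
  finally show ?thesis .
qed

lemma sum_max_0_eq_sum_subset:
  fixes f :: "'a \<Rightarrow> 'b::linordered_ab_group_add"
  assumes "finite I" and "K \<subseteq> I"
    and "\<And>k. k \<in> K \<Longrightarrow> 0 \<le> f k" and "\<And>k. k \<in> I - K \<Longrightarrow> f k \<le> 0"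
  shows "(\<Sum>k\<in>I. max 0 (f k)) = (\<Sum>k\<in>K. f k)"
proof -
  have "(\<Sum>k\<in>I. max 0 (f k)) = (\<Sum>k\<in>I. if k \<in> K then f k else 0)"
    by (rule sum.cong) (use assms(3,4) in auto)
  also have "\<dots> = (\<Sum>k\<in>K. f k)"
    using assms(1,2) by (simp add: sum.inter_restrict[symmetric] Int_absorb1)
  finally show ?thesis .
qed

lemma mult_le_envelope:
  fixes x g :: "'a::linordered_ring"
  assumes "m \<le> x" and "x \<le> M"
  shows "x * g \<le> m * g + (M - m) * max 0 g"
proof (cases "g \<ge> 0")
  case True
  then have "x * g \<le> M * g"
    using assms(2) by (simp add: mult_right_mono)
  then show ?thesis
    using True by (simp add: algebra_simps)
next
  case False
  then have "x * g \<le> m * g"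
    using assms(1) by (simp add: mult_right_mono_neg)
  then show ?thesis
    using False by simp
qed

lemma floor_eq_ceiling_half_if_even: "even n \<Longrightarrow> \<lfloor>real n / 2\<rfloor> = \<lceil>real n / 2\<rceil>"
proof -
  assume "even n"
  then obtain m where "n = 2 * m"
    by blast
  then have "real n / 2 = of_int (int m)"
    by simp
  then show ?thesis
    by (simp only: floor_of_int ceiling_of_int)
qed

lemma angle_le_pi_iff: "(d::real) > 0 \<Longrightarrow> 2 * pi * x / d \<le> pi * c \<longleftrightarrow> 2 * x \<le> c * d"
proof -
  assume "d > 0"
  then have "2 * pi * x / d \<le> pi * c \<longleftrightarrow> pi * (2 * x) \<le> pi * (c * d)"
    by (simp add: pos_divide_le_eq algebra_simps)
  then show ?thesis
    by simp
qed

lemma inner_of_real_mult_right: "u \<bullet> (complex_of_real c * w) = c * (u \<bullet> w)"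
  by (simp add: inner_complex_def algebra_simps)

lemma inner_divide_of_real_right: "u \<bullet> (w / complex_of_real c) = (u \<bullet> w) / c"
  by (simp add: inner_complex_def add_divide_distrib)

lemma inner_cis: "u \<bullet> cis a = cmod u * cos (a - Arg u)"
proof -
  have "Re u = cmod u * cos (Arg u)" "Im u = cmod u * sin (Arg u)"
    by (metis Re_rcis rcis_cmod_Arg, metis Im_rcis rcis_cmod_Arg)
  then show ?thesis
    unfolding inner_complex_def cos_diff by (simp add: algebra_simps)
qed

lemma mem_convex_hull_if_inner_le:
  fixes z :: "'a::euclidean_space"
  assumes "finite V" and "\<And>u. \<exists>v\<in>V. u \<bullet> z \<le> u \<bullet> v"
  shows "z \<in> convex hull V"
proof (rule ccontr)
  assume "z \<notin> convex hull V"
  moreover have "closed (convex hull V)"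
    using assms(1) by (simp add: compact_imp_closed compact_convex_hull finite_imp_compact)
  ultimately obtain a b where "a \<bullet> z < b" and "\<forall>x\<in>convex hull V. b < a \<bullet> x"
    using separating_hyperplane_closed_point[OF convex_convex_hull] by blast
  moreover obtain v where "v \<in> V" and "(- a) \<bullet> z \<le> (- a) \<bullet> v"
    using assms(2) by blast
  ultimately show False
    using hull_subset[of V convex] by force
qed

lemma convex_hull_mult_add_image:
  fixes c d :: "'a::real_normed_algebra"
  shows "(\<lambda>y. c * y + d) ` (convex hull S) = convex hull ((\<lambda>y. c * y + d) ` S)"
proof -
  have "(\<lambda>y. c * y + d) ` X = (+) d ` ((*) c ` X)" for X
    by (auto simp: image_image add.commute)
  then show ?thesis
    using convex_hull_linear_image[OF bounded_linear.linear[OF bounded_linear_mult_right], of c S]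
    by (simp add: convex_hull_translation)
qed

section \<open>Powers of the base and periodic expansions\<close>

lemma qbase_power: "qbase n p ^ k = complex_of_real (p ^ k) * cis (2 * pi * real k / real n)"
proof -
  have "cis (2 * pi / real n) ^ k = cis (2 * pi * real k / real n)"
    unfolding Complex.DeMoivre by (simp add: field_simps)
  then show ?thesis unfolding qbase_def power_mult_distrib of_real_power by simp
qed

lemma qbase_power_self: "n \<ge> 1 \<Longrightarrow> qbase n p ^ n = complex_of_real (p ^ n)"
  using qbase_power[of n p n] by simp

lemma norm_qbase: "norm (qbase n p) = \<bar>p\<bar>"
  unfolding qbase_def by (simp add: norm_mult)

lemma norm_inverse_qbase_power_le:
  assumes "p > 1"
  shows "norm (inverse (qbase n p ^ Suc i)) \<le> (1 / p) ^ i"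
proof -
  have "norm (inverse (qbase n p ^ Suc i)) = inverse (norm (qbase n p) ^ Suc i)"
    by (simp only: norm_inverse norm_power)
  also have "\<dots> = (1 / p) ^ Suc i"
    using assms by (simp add: norm_qbase power_one_over inverse_eq_divide)
  also have "\<dots> \<le> (1 / p) ^ i"
    using assms by (intro power_decreasing) auto
  finally show ?thesis .
qed

lemma inverse_qbase_power_shift:
  assumes "n \<ge> 1"
  shows "inverse (qbase n p ^ Suc (i + n)) = inverse (qbase n p ^ Suc i) / complex_of_real (p ^ n)"
proof -
  have "qbase n p ^ Suc (i + n) = qbase n p ^ Suc i * complex_of_real (p ^ n)"
    unfolding qbase_power_self[OF assms, symmetric] power_add[symmetric] by simp
  then show ?thesis
    by (simp only: inverse_mult_distrib divide_inverse of_real_power)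
qed

lemma qbase_power_self_mult_inverse:
  assumes "n \<ge> 1" and "p \<noteq> 0" and "i < n"
  shows "complex_of_real (p ^ n) * inverse (qbase n p ^ Suc i) = qbase n p ^ (n - Suc i)"
proof -
  have "qbase n p \<noteq> 0"
    using assms(2) norm_qbase[of n p] by auto
  moreover have "complex_of_real (p ^ n) = qbase n p ^ (n - Suc i) * qbase n p ^ Suc i"
    unfolding qbase_power_self[OF assms(1), symmetric] power_add[symmetric]
    using assms(3) by simp
  ultimately show ?thesis by (simp add: field_simps)
qed

lemma summable_digit_series:
  assumes "p > 1" and "\<And>i. \<bar>x (Suc i)\<bar> \<le> B"
  shows "summable (\<lambda>i. complex_of_real (x (Suc i)) / qbase n p ^ Suc i)"
proof (rule summable_geometric_bound[OF assms(1)])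
  fix i
  have "norm (complex_of_real (x (Suc i)) / qbase n p ^ Suc i)
      = \<bar>x (Suc i)\<bar> * norm (inverse (qbase n p ^ Suc i))"
    unfolding divide_inverse norm_mult norm_of_real ..
  also have "\<dots> \<le> B * (1 / p) ^ i"
    using assms(2)[of i] by (intro mult_mono norm_inverse_qbase_power_le[OF assms(1)]) auto
  finally show "norm (complex_of_real (x (Suc i)) / qbase n p ^ Suc i) \<le> B * (1 / p) ^ i" .
qed

text \<open>With digits of period \<open>n\<close>, dropping the first \<open>n\<close> terms multiplies the expansion by the
  real number \<open>q\<^sup>-\<^sup>n = p\<^sup>-\<^sup>n\<close>, so its value is a finite sum over one period.\<close>

lemma periodic_digit_series_sums:
  assumes n: "n \<ge> 1" and p: "p > 1"
    and bounded: "\<And>i. \<bar>x (Suc i)\<bar> \<le> B" and periodic: "\<And>i. x (Suc (i + n)) = x (Suc i)"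
  shows "(\<lambda>i. complex_of_real (x (Suc i)) / qbase n p ^ Suc i) sums
           ((\<Sum>k<n. complex_of_real (x (n - k)) * qbase n p ^ k) / (complex_of_real (p ^ n) - 1))"
proof (rule sums_scaled_periodic[OF summable_digit_series[where x = x, OF p bounded]])
  have "p ^ n > 1"
    using p n by (simp add: one_less_power)
  then show "complex_of_real (p ^ n) \<noteq> 1" and "complex_of_real (p ^ n) \<noteq> 0"
    using p by (auto simp del: of_real_power)
  show "complex_of_real (x (Suc (i + n))) / qbase n p ^ Suc (i + n)
      = complex_of_real (x (Suc i)) / qbase n p ^ Suc i / complex_of_real (p ^ n)" for i
    unfolding divide_inverse[of _ "qbase n p ^ _"] inverse_qbase_power_shift[OF n] periodic
    by (simp add: divide_inverse)
  show "complex_of_real (p ^ n) * (complex_of_real (x (Suc i)) / qbase n p ^ Suc i)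
      = complex_of_real (x (n - (n - Suc i))) * qbase n p ^ (n - Suc i)" if "i < n" for i
    using qbase_power_self_mult_inverse[OF n _ that, of p] p that
    by (simp add: divide_inverse algebra_simps Suc_diff_Suc)
qed

definition lam_affine :: "nat \<Rightarrow> real \<Rightarrow> real set \<Rightarrow> complex \<Rightarrow> complex" where
  "lam_affine n p A y = complex_of_real ((Max A - Min A) / (p ^ n - 1)) * y
     + complex_of_real (1 / (p ^ n - 1)) * (\<Sum>k<n. complex_of_real (Min A) * qbase n p ^ k)"

lemma inner_lam_affine:
  "u \<bullet> lam_affine n p A v
     = (Min A * (\<Sum>k<n. u \<bullet> qbase n p ^ k) + (Max A - Min A) * (u \<bullet> v)) / (p ^ n - 1)"
  unfolding lam_affine_def inner_add_right inner_of_real_mult_right inner_sum_right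
  by (simp add: sum_distrib_left sum_divide_distrib add_divide_distrib)

text \<open>The image of \<open>\<Sum>\<^sub>k\<^sub>\<in>\<^sub>K q\<^sup>k\<close> is the value of the periodic expansion whose digit
  in front of \<open>q\<^sup>-\<^sup>j\<close> is \<open>Max A\<close> exactly when \<open>-j mod n \<in> K\<close>, and \<open>Min A\<close> otherwise.\<close>

lemma lam_affine_sum_mem_Lam:
  assumes n: "n \<ge> 1" and p: "p > 1" and A: "finite A" "A \<noteq> {}" and K: "K \<subseteq> {..<n}"
  shows "lam_affine n p A (\<Sum>k\<in>K. qbase n p ^ k) \<in> Lam n p A"
proof -
  define D where "D k = (if k \<in> K then Max A else Min A)" for k
  define x where "x j = D (n - Suc ((j - 1) mod n))" for j
  have x: "\<forall>j\<ge>1. x j \<in> A"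
    using A by (simp add: x_def D_def)
  have "(\<lambda>i. complex_of_real (x (Suc i)) / qbase n p ^ Suc i) sums
          ((\<Sum>k<n. complex_of_real (x (n - k)) * qbase n p ^ k) / (complex_of_real (p ^ n) - 1))"
    by (rule periodic_digit_series_sums[OF n p, where B = "\<bar>Min A\<bar> + \<bar>Max A\<bar>"])
      (auto simp: x_def D_def)
  also have "(\<Sum>k<n. complex_of_real (x (n - k)) * qbase n p ^ k)
      = (\<Sum>k<n. complex_of_real (Min A) * qbase n p ^ k)
        + complex_of_real (Max A - Min A) * (\<Sum>k\<in>K. qbase n p ^ k)"
    unfolding sum_two_valued_coeffs[OF K, symmetric]
    by (rule sum.cong) (auto simp: x_def D_def Suc_diff_Suc)
  also have "(\<dots>) / (complex_of_real (p ^ n) - 1) = lam_affine n p A (\<Sum>k\<in>K. qbase n p ^ k)"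
    unfolding lam_affine_def by (simp add: add_divide_distrib add.commute)
  finally show ?thesis
    unfolding Lam_def using x by (auto dest: sums_unique)
qed

section \<open>Support function of \<open>\<Lambda>\<close>\<close>

definition digit_weight :: "nat \<Rightarrow> real \<Rightarrow> complex \<Rightarrow> nat \<Rightarrow> real" where
  "digit_weight n p u i = u \<bullet> inverse (qbase n p ^ Suc i)"

lemma digit_weight_shift:
  "n \<ge> 1 \<Longrightarrow> digit_weight n p u (i + n) = digit_weight n p u i / p ^ n"
  unfolding digit_weight_def inverse_qbase_power_shift inner_divide_of_real_right ..

lemma digit_weight_period:
  "n \<ge> 1 \<Longrightarrow> p \<noteq> 0 \<Longrightarrow> i < n \<Longrightarrow> p ^ n * digit_weight n p u i = u \<bullet> qbase n p ^ (n - Suc i)"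
  unfolding digit_weight_def qbase_power_self_mult_inverse[symmetric] inner_of_real_mult_right ..

lemma abs_digit_weight_le: "p > 1 \<Longrightarrow> \<bar>digit_weight n p u i\<bar> \<le> norm u * (1 / p) ^ i"
  unfolding digit_weight_def
  by (rule order_trans[OF Cauchy_Schwarz_ineq2 mult_left_mono[OF norm_inverse_qbase_power_le]]) simp_all

lemma inner_digit_series_sums:
  assumes "p > 1" and "\<And>i. \<bar>x (Suc i)\<bar> \<le> B"
  shows "(\<lambda>i. x (Suc i) * digit_weight n p u i) sums
           (u \<bullet> (\<Sum>j. complex_of_real (x (Suc j)) / qbase n p ^ Suc j))"
  using bounded_linear.sums[OF bounded_linear_inner_right,
      OF summable_sums[OF summable_digit_series[where x = x, OF assms]], of u]
  by (simp add: digit_weight_def divide_inverse scaleR_conv_of_real[symmetric])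

lemma digit_envelope_sums:
  assumes n: "n \<ge> 1" and p: "p > 1" and "c \<ge> 0"
  shows "(\<lambda>i. m * digit_weight n p u i + c * max 0 (digit_weight n p u i)) sums
           ((m * (\<Sum>k<n. u \<bullet> qbase n p ^ k) + c * (\<Sum>k<n. max 0 (u \<bullet> qbase n p ^ k))) / (p ^ n - 1))"
proof -
  let ?g = "digit_weight n p u"
  have P: "p ^ n > 1"
    using p n by (simp add: one_less_power)
  have "summable ?g" and "summable (\<lambda>i. max 0 (?g i))"
    using abs_digit_weight_le[OF p] p
    by (auto intro!: summable_geometric_bound[OF p, of _ "norm u"] simp: abs_le_iff)
  then have "summable (\<lambda>i. m * ?g i + c * max 0 (?g i))"
    by (intro summable_add summable_mult)
  then have "(\<lambda>i. m * ?g i + c * max 0 (?g i)) sums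
      ((\<Sum>k<n. m * (u \<bullet> qbase n p ^ k) + c * max 0 (u \<bullet> qbase n p ^ k)) / (p ^ n - 1))"
  proof (rule sums_scaled_periodic)
    have "max 0 (?g i / p ^ n) = max 0 (?g i) / p ^ n" for i
      using P by (simp add: max_divide_distrib_right)
    then show "m * ?g (i + n) + c * max 0 (?g (i + n)) = (m * ?g i + c * max 0 (?g i)) / p ^ n" for i
      by (simp add: digit_weight_shift[OF n] add_divide_distrib)
    show "p ^ n * (m * ?g i + c * max 0 (?g i))
        = m * (u \<bullet> qbase n p ^ (n - Suc i)) + c * max 0 (u \<bullet> qbase n p ^ (n - Suc i))" if "i < n" for i
    proof -
      have "p ^ n * (m * ?g i + c * max 0 (?g i)) = m * (p ^ n * ?g i) + c * max 0 (p ^ n * ?g i)"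
        using P by (simp add: algebra_simps max_mult_distrib_left[of "p ^ n"])
      then show ?thesis
        using digit_weight_period[OF n _ that] p by simp
    qed
  qed (use P p in auto)
  then show ?thesis
    by (simp add: sum.distrib sum_distrib_left)
qed

lemma inner_Lam_le:
  assumes n: "n \<ge> 1" and p: "p > 1" and A: "finite A" and z: "z \<in> Lam n p A"
  shows "u \<bullet> z \<le> (Min A * (\<Sum>k<n. u \<bullet> qbase n p ^ k)
                     + (Max A - Min A) * (\<Sum>k<n. max 0 (u \<bullet> qbase n p ^ k))) / (p ^ n - 1)"
proof -
  obtain x where z: "z = (\<Sum>j. complex_of_real (x (Suc j)) / qbase n p ^ Suc j)"
    and x: "\<forall>j\<ge>1. x j \<in> A"
    using z unfolding Lam_def by blast
  have x_bounds: "Min A \<le> x (Suc i)" "x (Suc i) \<le> Max A" for i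
    using x A by (simp_all add: Min_le Max_ge)
  have "\<bar>x (Suc i)\<bar> \<le> \<bar>Min A\<bar> + \<bar>Max A\<bar>" for i
    using x_bounds[of i] by linarith
  moreover have "Min A \<le> Max A"
    using x_bounds[of 0] by linarith
  ultimately show ?thesis
    unfolding z using x_bounds
    by (intro sums_le[OF _ inner_digit_series_sums[OF p] digit_envelope_sums[OF n p]] mult_le_envelope)
      simp_all
qed

section \<open>Powers of the base with positive projection form a cyclic arc\<close>

lemma inner_cis_grid:
  fixes n :: nat and k k0 :: int and t :: real
  assumes "n > 0" and "Arg u = 2 * pi * (k0 - t) / n + pi / 2"
  shows "u \<bullet> cis (2 * pi * k / n) = cmod u * sin (2 * pi * (t + (k - k0) mod n) / n)"
proof -
  define j where "j = (k - k0) mod n"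
  define m where "m = (k - k0) div n"
  have "k = k0 + j + int n * m"
    unfolding j_def m_def by simp
  then have "real_of_int k = k0 + j + n * m"
    by (metis of_int_add of_int_mult of_int_of_nat_eq)
  then have "2 * pi * k / n - Arg u = (2 * pi * (t + j) / n - pi / 2) + m * (2 * pi)"
    using assms(1) unfolding assms(2) by (simp add: field_simps)
  then have "cos (2 * pi * k / n - Arg u) = cos (2 * pi * (t + j) / n - pi / 2)"
    using cos.plus_of_int[of "2 * pi * (t + j) / n - pi / 2" m] by simp
  then show ?thesis
    unfolding inner_cis j_def by (simp add: cos_diff)
qed

lemma sin_sign_grid:
  fixes n :: nat and j :: int and t :: real
  assumes n: "n \<ge> 1" and t: "0 < t" "t \<le> 1" and j: "0 \<le> j" "j < n"
  shows "j \<le> \<lfloor>n / 2 - t\<rfloor> \<Longrightarrow> 0 \<le> sin (2 * pi * (t + j) / n)"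
    and "\<not> j \<le> \<lfloor>n / 2 - t\<rfloor> \<Longrightarrow> sin (2 * pi * (t + j) / n) \<le> 0"
proof -
  have npos: "real n > 0"
    using n by simp
  have "0 \<le> 2 * pi * (t + j) / n"
    using t j by simp
  moreover assume "j \<le> \<lfloor>n / 2 - t\<rfloor>"
  then have "2 * pi * (t + j) / n \<le> pi * 1"
    unfolding angle_le_pi_iff[OF npos] le_floor_iff by simp
  ultimately show "0 \<le> sin (2 * pi * (t + j) / n)"
    by (intro sin_ge_zero) auto
next
  have npos: "real n > 0"
    using n by simp
  assume "\<not> j \<le> \<lfloor>n / 2 - t\<rfloor>"
  then have "real n / 2 - t < j"
    by (simp add: le_floor_iff)
  then have "\<not> 2 * pi * (t + j) / n \<le> pi * 1"
    unfolding angle_le_pi_iff[OF npos] by (simp add: field_simps)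
  then have "pi * 1 < 2 * pi * (t + j) / n"
    by simp
  moreover have "real_of_int (j + 1) \<le> real_of_int (int n)"
    using j by (simp only: of_int_le_iff)
  then have "2 * pi * (t + j) / n \<le> pi * 2"
    unfolding angle_le_pi_iff[OF npos] using t by simp
  ultimately show "sin (2 * pi * (t + j) / n) \<le> 0"
    by (cases "2 * pi * (t + j) / n = 2 * pi") (auto intro: sin_le_zero)
qed

text \<open>The half-plane \<open>u \<bullet> w \<ge> 0\<close> is bounded by the ray at angle \<open>Arg u - pi/2\<close>; \<open>k0\<close> is the
  first index \<open>k\<close> with angle \<open>2 pi k / n\<close> beyond it and \<open>t \<in> (0, 1]\<close> the fractional offset of that grid point,
  so the nonnegative indices are the \<open>\<lfloor>n/2 - t\<rfloor> + 1\<close> consecutive residues starting at \<open>k0\<close>.\<close>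

lemma inner_cis_sign_arc:
  fixes n :: nat
  assumes n: "n \<ge> 1"
  obtains L k0 :: int where "L = \<lfloor>n / 2\<rfloor> \<or> L = \<lceil>n / 2\<rceil>"
    and "\<And>k::nat. (int k - k0) mod n \<le> L - 1 \<Longrightarrow> 0 \<le> u \<bullet> cis (2 * pi * k / n)"
    and "\<And>k::nat. \<not> (int k - k0) mod n \<le> L - 1 \<Longrightarrow> u \<bullet> cis (2 * pi * k / n) \<le> 0"
proof -
  define y where "y = n * (Arg u - pi / 2) / (2 * pi)"
  define k0 where "k0 = \<lfloor>y\<rfloor> + 1"
  define t where "t = k0 - y"
  define L where "L = \<lfloor>n / 2 - t\<rfloor> + 1"
  have t: "0 < t" "t \<le> 1"
    unfolding t_def k0_def by linarith+
  have arg: "Arg u = 2 * pi * (k0 - t) / n + pi / 2"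
    unfolding t_def y_def using n by (simp add: field_simps)
  have "\<lfloor>n / 2\<rfloor> - 1 \<le> \<lfloor>n / 2 - t\<rfloor>"
    using t by linarith
  moreover have "\<lfloor>n / 2 - t\<rfloor> < \<lceil>real n / 2\<rceil>"
    using t le_of_int_ceiling[of "real n / 2"] unfolding floor_less_iff by linarith
  moreover have "\<lceil>real n / 2\<rceil> \<le> \<lfloor>real n / 2\<rfloor> + 1"
    unfolding ceiling_altdef by simp
  ultimately have "L = \<lfloor>n / 2\<rfloor> \<or> L = \<lceil>n / 2\<rceil>"
    unfolding L_def by linarith
  then show thesis
  proof (rule that)
    fix k :: nat
    have grid: "u \<bullet> cis (2 * pi * k / n) = cmod u * sin (2 * pi * (t + (int k - k0) mod n) / n)"
      using inner_cis_grid[OF _ arg, of "int k"] n by simp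
    have j: "0 \<le> (int k - k0) mod n" "(int k - k0) mod n < n"
      using n by simp_all
    show "0 \<le> u \<bullet> cis (2 * pi * k / n)" if "(int k - k0) mod n \<le> L - 1"
      using sin_sign_grid(1)[OF n t j] that unfolding grid L_def by simp
    show "u \<bullet> cis (2 * pi * k / n) \<le> 0" if "\<not> (int k - k0) mod n \<le> L - 1"
      using sin_sign_grid(2)[OF n t j] that unfolding grid L_def by (simp add: mult_nonneg_nonpos)
  qed
qed

lemma vv_eq_sum_arc:
  assumes "h \<ge> 1" and "(int h - 1) mod n = k0 mod n"
    and L: "L = \<lfloor>real n / 2\<rfloor> \<or> L = \<lceil>real n / 2\<rceil>"
  shows "vv n p (if L = \<lceil>real n / 2\<rceil> then 2 * h else 2 * h - 1)
           = (\<Sum>k\<in>{k \<in> {0..<n}. (int k - k0) mod n \<le> L - 1}. qbase n p ^ k)"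
proof -
  have shift: "(int k - int h + 1) mod n = (int k - k0) mod n" for k
    using mod_diff_right_eq[of "int k" "int h - 1" n] mod_diff_right_eq[of "int k" k0 n] assms(2)
    by (simp add: algebra_simps)
  have "Kup n h = {k \<in> {0..<n}. (int k - k0) mod n \<le> \<lceil>real n / 2\<rceil> - 1}"
    and "Klow n h = {k \<in> {0..<n}. (int k - k0) mod n \<le> \<lfloor>real n / 2\<rfloor> - 1}"
    unfolding Kup_def Klow_def shift by simp_all
  moreover have "odd (2 * h - 1)" and "Suc ((2 * h - 1) div 2) = h"
    using assms(1) by auto
  ultimately show ?thesis
    using L unfolding vv_def by auto
qed

lemma sum_max_0_inner_eq_inner_vv:
  assumes n: "n \<ge> 1" and p: "p > 0"
  obtains h m where "h \<in> {1..n}" and "m = 2 * h - 1 \<or> m = 2 * h" and "even n \<Longrightarrow> m = 2 * h"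
    and "(\<Sum>k<n. max 0 (u \<bullet> qbase n p ^ k)) = u \<bullet> vv n p m"
proof -
  obtain L k0 where L: "L = \<lfloor>real n / 2\<rfloor> \<or> L = \<lceil>real n / 2\<rceil>"
    and pos: "\<And>k::nat. (int k - k0) mod n \<le> L - 1 \<Longrightarrow> 0 \<le> u \<bullet> cis (2 * pi * k / n)"
    and neg: "\<And>k::nat. \<not> (int k - k0) mod n \<le> L - 1 \<Longrightarrow> u \<bullet> cis (2 * pi * k / n) \<le> 0"
    by (rule inner_cis_sign_arc[OF n, of u]) blast
  define h where "h = nat (k0 mod n) + 1"
  define K where "K = {k \<in> {0..<n}. (int k - k0) mod n \<le> L - 1}"
  define m where "m = (if L = \<lceil>real n / 2\<rceil> then 2 * h else 2 * h - 1)"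
  have "0 \<le> k0 mod n" "k0 mod n < n"
    using n by simp_all
  then have h: "h \<in> {1..n}" and "(int h - 1) mod n = k0 mod n"
    unfolding h_def by (simp_all add: nat_less_iff)
  then have "vv n p m = (\<Sum>k\<in>K. qbase n p ^ k)"
    unfolding m_def K_def by (intro vv_eq_sum_arc L) simp_all
  moreover have inner_power: "u \<bullet> qbase n p ^ k = p ^ k * (u \<bullet> cis (2 * pi * k / n))" for k
    unfolding qbase_power scaleR_conv_of_real[symmetric] by simp
  have "(\<Sum>k<n. max 0 (u \<bullet> qbase n p ^ k)) = (\<Sum>k\<in>K. u \<bullet> qbase n p ^ k)"
  proof (rule sum_max_0_eq_sum_subset)
    show "K \<subseteq> {..<n}"
      unfolding K_def by auto
    show "0 \<le> u \<bullet> qbase n p ^ k" if "k \<in> K" for k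
      using pos[of k] that p unfolding K_def inner_power by simp
    show "u \<bullet> qbase n p ^ k \<le> 0" if "k \<in> {..<n} - K" for k
      using neg[of k] that p unfolding K_def inner_power by (simp add: mult_nonneg_nonpos)
  qed simp
  ultimately have "(\<Sum>k<n. max 0 (u \<bullet> qbase n p ^ k)) = u \<bullet> vv n p m"
    by (simp add: inner_sum_right)
  moreover have "m = 2 * h - 1 \<or> m = 2 * h"
    unfolding m_def by simp
  moreover have "even n \<Longrightarrow> m = 2 * h"
    using L unfolding m_def by (auto dest: floor_eq_ceiling_half_if_even)
  ultimately show thesis
    using that[OF h] by blast
qed

lemma vv_eq_subset_sum: "\<exists>K\<subseteq>{..<n}. vv n p m = (\<Sum>k\<in>K. qbase n p ^ k)"
  by (rule exI[of _ "if odd m then Klow n ((m + 1) div 2) else Kup n (m div 2)"])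
    (auto simp: vv_def Klow_def Kup_def)

lemma vv_support:
  assumes "n \<ge> 1" and "p > 0"
  shows "\<exists>v\<in>vv n p ` {1..2*n}. (\<Sum>k<n. max 0 (u \<bullet> qbase n p ^ k)) \<le> u \<bullet> v"
proof -
  obtain h m where "h \<in> {1..n}" and "m = 2 * h - 1 \<or> m = 2 * h"
    and "(\<Sum>k<n. max 0 (u \<bullet> qbase n p ^ k)) = u \<bullet> vv n p m"
    by (rule sum_max_0_inner_eq_inner_vv[OF assms, where u = u]) blast
  moreover from this have "m \<in> {1..2*n}"
    by auto
  ultimately show ?thesis
    by auto
qed

lemma vv_even_support:
  assumes "n \<ge> 1" and "p > 0" and "even n"
  shows "\<exists>v\<in>(\<lambda>h. vv n p (2*h)) ` {1..n}. (\<Sum>k<n. max 0 (u \<bullet> qbase n p ^ k)) \<le> u \<bullet> v"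
proof -
  obtain h m where "h \<in> {1..n}" and "even n \<Longrightarrow> m = 2 * h"
    and "(\<Sum>k<n. max 0 (u \<bullet> qbase n p ^ k)) = u \<bullet> vv n p m"
    by (rule sum_max_0_inner_eq_inner_vv[OF assms(1,2), where u = u]) blast
  with assms(3) show ?thesis
    by auto
qed

lemma convex_hull_Lam_eq:
  assumes n: "n \<ge> 1" and p: "p > 1" and A: "finite A" "A \<noteq> {}" and V: "finite V"
    and subset_sums: "\<And>v. v \<in> V \<Longrightarrow> \<exists>K\<subseteq>{..<n}. v = (\<Sum>k\<in>K. qbase n p ^ k)"
    and support: "\<And>u. \<exists>v\<in>V. (\<Sum>k<n. max 0 (u \<bullet> qbase n p ^ k)) \<le> u \<bullet> v"
  shows "convex hull (Lam n p A) = lam_affine n p A ` (convex hull V)"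
proof -
  have image: "lam_affine n p A ` (convex hull V) = convex hull (lam_affine n p A ` V)"
    unfolding lam_affine_def by (rule convex_hull_mult_add_image)
  have "Lam n p A \<subseteq> convex hull (lam_affine n p A ` V)"
  proof
    fix z assume z: "z \<in> Lam n p A"
    show "z \<in> convex hull (lam_affine n p A ` V)"
    proof (rule mem_convex_hull_if_inner_le)
      fix u
      obtain v where "v \<in> V" and v: "(\<Sum>k<n. max 0 (u \<bullet> qbase n p ^ k)) \<le> u \<bullet> v"
        using support by blast
      have "p ^ n > 1" and "Min A \<le> Max A"
        using p n A by (simp_all add: one_less_power)
      then have "u \<bullet> z \<le> u \<bullet> lam_affine n p A v"
        unfolding inner_lam_affine
        by (intro order_trans[OF inner_Lam_le[OF n p A(1) z]] divide_right_mono add_left_mono mult_left_mono v) auto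
      then show "\<exists>w\<in>lam_affine n p A ` V. u \<bullet> z \<le> u \<bullet> w"
        using \<open>v \<in> V\<close> by blast
    qed (use V in simp)
  qed
  then have "convex hull (Lam n p A) \<subseteq> lam_affine n p A ` (convex hull V)"
    unfolding image by (intro hull_minimal convex_convex_hull)
  moreover have "lam_affine n p A ` V \<subseteq> Lam n p A"
    using subset_sums lam_affine_sum_mem_Lam[OF n p A] by blast
  then have "lam_affine n p A ` (convex hull V) \<subseteq> convex hull (Lam n p A)"
    unfolding image by (rule hull_mono)
  ultimately show ?thesis
    by blast
qed

theorem theorem3p15:
  fixes n :: nat and p :: real and A :: "real set"
  assumes "n \<ge> 1" and "p > 1" and "finite A" and "A \<noteq> {}"
  shows "convex hull (Lam n p A) =
           (\<lambda>y. complex_of_real ((Max A - Min A) / (p ^ n - 1)) * y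
                + complex_of_real (1 / (p ^ n - 1)) * (\<Sum>k<n. complex_of_real (Min A) * (qbase n p) ^ k))
           ` (convex hull (vv n p ` {1..2*n}))
       \<and> (even n \<longrightarrow> convex hull (Lam n p A) =
           (\<lambda>y. complex_of_real ((Max A - Min A) / (p ^ n - 1)) * y
                + complex_of_real (1 / (p ^ n - 1)) * (\<Sum>k<n. complex_of_real (Min A) * (qbase n p) ^ k))
           ` (convex hull ((\<lambda>h. vv n p (2*h)) ` {1..n})))"
proof -
  have p0: "p > 0"
    using assms(2) by simp
  have "convex hull (Lam n p A) = lam_affine n p A ` (convex hull (vv n p ` {1..2*n}))"
    using vv_eq_subset_sum vv_support[OF assms(1) p0] by (intro convex_hull_Lam_eq[OF assms]) auto
  moreover have "convex hull (Lam n p A) = lam_affine n p A ` (convex hull ((\<lambda>h. vv n p (2*h)) ` {1..n}))"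
    if "even n"
    using vv_eq_subset_sum vv_even_support[OF assms(1) p0 that]
    by (intro convex_hull_Lam_eq[OF assms]) auto
  ultimately show ?thesis
    unfolding lam_affine_def[abs_def] by blast
qed

end
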